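(* Let $p$ be a prime. Let $X$ be a finite group with a core-free subgroup $Y$ and a normal subgroup $N$; let $G=X/N$ with quotient map $x\mapsto\overline{x}$ and let $H=\overline{Y}$. Suppose $H$ is core-free in $G$ and that $G$, acting transitively on the right cosets of $H$, is not $p$-elusive. If $X$, acting transitively on the right cosets of $Y$, is $p$-elusive, then $X$ does not split over $N$ (that is, $N$ has no complement in $X$).
   Context: A derangement is a permutation with no fixed points. For a prime $p$, a transitive permutation group is $p$-elusive if it has no derangements of order $p$. *)

theory Defs
  imports "HOL-Algebra.Multiplicative_Group" "HOL-Computational_Algebra.Primes"
begin

definition core_free :: "('a, 'b) monoid_scheme \<Rightarrow> 'a set \<Rightarrow> bool" where
  "core_free G H \<longleftrightarrow>
     (\<Inter>g\<in>carrier G. {inv\<^bsub>G\<^esub> g \<otimes>\<^bsub>G\<^esub> h \<otimes>\<^bsub>G\<^esub> g | h. h \<in> H}) = {\<one>\<^bsub>G\<^esub>}"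

definition derangement_on_cosets :: "('a, 'b) monoid_scheme \<Rightarrow> 'a set \<Rightarrow> 'a \<Rightarrow> bool" where
  "derangement_on_cosets G H g \<longleftrightarrow>
     g \<in> carrier G \<and> (\<forall>C \<in> rcosets\<^bsub>G\<^esub> H. C #>\<^bsub>G\<^esub> g \<noteq> C)"

definition p_elusive_on_cosets :: "('a, 'b) monoid_scheme \<Rightarrow> 'a set \<Rightarrow> nat \<Rightarrow> bool" where
  "p_elusive_on_cosets G H p \<longleftrightarrow>
     \<not> (\<exists>g \<in> carrier G. group.ord G g = p \<and> derangement_on_cosets G H g)"

definition splits_over :: "('a, 'b) monoid_scheme \<Rightarrow> 'a set \<Rightarrow> bool" where
  "splits_over X N \<longleftrightarrow>
     (\<exists>K. subgroup K X \<and> K \<inter> N = {one X} \<and> set_mult X N K = carrier X)"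

end

theory Submission
  imports Defs
begin

text \<open>If K is a complement of N in X, then k \<mapsto> N k maps K isomorphically onto G = X/N. A derangement
  of order p in G is therefore the image of some k \<in> K of order p. If k fixed a coset Y x, then N k
  would fix the coset H (N x), so k is a derangement of order p of X, contradicting p-elusivity.\<close>

lemma (in normal) FactGroup_rcos_image:
  assumes "S \<subseteq> carrier G" "k \<in> carrier G"
  shows "((\<lambda>z. H #> z) ` S) #>\<^bsub>G Mod H\<^esub> (H #> k) = (\<lambda>z. H #> z) ` (S #> k)"
  unfolding r_coset_def[of "G Mod H"]
  using assms by (auto simp: rcos_sum r_coset_def[of G S] subset_iff)

lemma (in normal) derangement_on_cosets_of_FactGroup:
  assumes Y: "subgroup Y G" and k: "k \<in> carrier G"
    and der: "derangement_on_cosets (G Mod H) ((\<lambda>y. H #> y) ` Y) (H #> k)"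
  shows "derangement_on_cosets G Y k"
  unfolding derangement_on_cosets_def
proof (intro conjI ballI k)
  let ?\<pi> = "\<lambda>z. H #> z"
  fix C assume "C \<in> rcosets Y"
  then obtain x where x: "x \<in> carrier G" "C = Y #> x"
    unfolding RCOSETS_def by blast
  have Y_sub: "Y \<subseteq> carrier G" using Y by (rule subgroup.subset)
  have C_sub: "C \<subseteq> carrier G" using x Y_sub r_coset_subset_G by blast
  let ?C' = "(?\<pi> ` Y) #>\<^bsub>G Mod H\<^esub> (H #> x)"
  have C'_eq: "?C' = ?\<pi> ` C"
    using FactGroup_rcos_image[OF Y_sub x(1)] x(2) by simp
  have C'_coset: "?C' \<in> rcosets\<^bsub>G Mod H\<^esub> (?\<pi> ` Y)"
    using x(1) Y_sub
    by (intro group.rcosetsI[OF factorgroup_is_group]) (auto simp: carrier_FactGroup)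
  show "C #> k \<noteq> C"
  proof
    assume "C #> k = C"
    then have "?C' #>\<^bsub>G Mod H\<^esub> (H #> k) = ?C'"
      using FactGroup_rcos_image[OF C_sub k] C'_eq by simp
    then show False
      using der C'_coset unfolding derangement_on_cosets_def by blast
  qed
qed

lemma (in normal) ord_FactGroup_rcos:
  assumes K: "subgroup K G" "K \<inter> H = {\<one>}" and k: "k \<in> K"
  shows "group.ord (G Mod H) (H #> k) = ord k"
proof -
  interpret Q: group "G Mod H" by (rule factorgroup_is_group)
  have k_carr: "k \<in> carrier G" using K(1) k by (rule subgroup.mem_carrier)
  have pow_one_iff: "(H #> k) [^]\<^bsub>G Mod H\<^esub> n = \<one>\<^bsub>G Mod H\<^esub> \<longleftrightarrow> k [^] n = \<one>" for n :: nat
  proof -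
    have "k [^] n \<in> K"
      using subgroup_int_pow_closed[OF K(1) k, of "int n"] by (simp add: int_pow_int)
    then have "k [^] n \<in> H \<longleftrightarrow> k [^] n = \<one>" using K(2) by auto
    moreover have "H #> (k [^] n) = H \<longleftrightarrow> k [^] n \<in> H"
      using k_carr coset_join1[OF _ _ is_subgroup] coset_join2[OF _ is_subgroup] by blast
    ultimately show ?thesis using k_carr by (simp add: FactGroup_pow)
  qed
  have "H #> k \<in> carrier (G Mod H)" using k_carr by (auto simp: carrier_FactGroup)
  then show ?thesis
    by (simp add: Q.ord_unique pow_one_iff k_carr pow_eq_id del: one_FactGroup)
qed

lemma (in normal) FactGroup_rcos_complement_representative:
  assumes "subgroup K G" "H <#> K = carrier G" and C: "C \<in> carrier (G Mod H)"
  obtains k where "k \<in> K" "C = H #> k"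
proof -
  obtain g where g: "g \<in> carrier G" "C = H #> g"
    using C unfolding carrier_FactGroup by blast
  then obtain h k where hk: "h \<in> H" "k \<in> K" "g = h \<otimes> k"
    using assms(2) unfolding set_mult_def by blast
  have "k \<in> carrier G" using assms(1) hk(2) by (rule subgroup.mem_carrier)
  with hk have "H #> g = (H #> h) #> k"
    by (simp add: coset_mult_assoc subset)
  also have "H #> h = H"
    using hk(1) by (simp add: coset_join2 is_subgroup)
  finally show ?thesis using that g(2) hk(2) by simp
qed

theorem lemma2p3:
  fixes X :: "('a, 'b) monoid_scheme" and Y N :: "'a set" and p :: nat
  assumes "prime p"
    and "group X" and "finite (carrier X)"
    and "subgroup Y X" and "core_free X Y"
    and "N \<lhd> X"
    and "core_free (X Mod N) ((\<lambda>y. N #>\<^bsub>X\<^esub> y) ` Y)"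
    and "\<not> p_elusive_on_cosets (X Mod N) ((\<lambda>y. N #>\<^bsub>X\<^esub> y) ` Y) p"
    and "p_elusive_on_cosets X Y p"
  shows "\<not> splits_over X N"
proof
  interpret normal N X by fact
  assume "splits_over X N"
  then obtain K where K: "subgroup K X" "K \<inter> N = {\<one>\<^bsub>X\<^esub>}" "N <#>\<^bsub>X\<^esub> K = carrier X"
    unfolding splits_over_def by blast
  obtain g where g: "g \<in> carrier (X Mod N)" "group.ord (X Mod N) g = p"
    "derangement_on_cosets (X Mod N) ((\<lambda>y. N #>\<^bsub>X\<^esub> y) ` Y) g"
    using assms(8) unfolding p_elusive_on_cosets_def by blast
  obtain k where k: "k \<in> K" "g = N #>\<^bsub>X\<^esub> k"
    using FactGroup_rcos_complement_representative[OF K(1,3) g(1)] .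
  have k_carr: "k \<in> carrier X" using K(1) k(1) by (rule subgroup.mem_carrier)
  have "ord k = p"
    using ord_FactGroup_rcos[OF K(1,2) k(1)] g(2) k(2) by simp
  moreover have "derangement_on_cosets X Y k"
    using derangement_on_cosets_of_FactGroup[OF assms(4) k_carr] g(3) k(2) by simp
  ultimately show False
    using assms(9) k_carr unfolding p_elusive_on_cosets_def by blast
qed

end
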